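(* Let $G=(V,E)$ be a strongly connected digraph with $V=\{v_1,\dots,v_n\}$. Then every evolution $(A_k)_{k\geq 0}$ of the set-valued map $f_{\mathrm{imcor}}$ on $\operatorname{Adj}(G)$ (i.e., any $A_0\in\operatorname{Adj}(G)$ and $A_{k+1}\in f_{\mathrm{imcor}}(A_k)$ for all $k$) converges in finite time to a weight-balanced adjacency matrix: there exists $K$ such that $A_K$ is weight-balanced and $A_k=A_K$ for all $k\geq K$.
   Context: A digraph $G=(V,E)$ has finite vertex set $V$ and edge set $E\subseteq V\times V$; it is strongly connected if there is a directed path between every ordered pair of distinct vertices. $\operatorname{Adj}(G)$ is the set of matrices $A=(a_{ij})\in\mathbb{R}^{n\times n}_{\geq0}$ with $a_{ij}>0$ if $(v_i,v_j)\in E$ and $a_{ij}=0$ otherwise. For $A\in\operatorname{Adj}(G)$, the imbalance of $v_i$ is $\omega(v_i)=\sum_{j}a_{ji}-\sum_j a_{ij}$, and $A$ is weight-balanced if $\omega(v_i)=0$ for all $i$. For $A\in\operatorname{Adj}(G)$ and each $i$, let $a_i^*=\min\{a_{ik}: k\in\{1,\dots,n\}\setminus\{i\},\ a_{ik}\neq0\}$ and $J_i^*=\{j\in\{1,\dots,n\}\setminus\{i\}: a_{ij}=a_i^*\}$. The map $f_{\mathrm{imcor}}:\operatorname{Adj}(G)\rightrightarrows\operatorname{Adj}(G)$ assigns to $A$ the set of all $B\in\operatorname{Adj}(G)$ such that for each $i$ there exists $j_i^*\in J_i^*$ with $b_{ij}=a_{ij}+\omega(v_i)$ if $\omega(v_i)>0$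 and $j=j_i^*$, and $b_{ij}=a_{ij}$ otherwise (imbalances computed with respect to $A$). This models a synchronous algorithm in which each agent with positive imbalance adds its imbalance to one of its out-edges (to a vertex other than itself) of minimum weight. *)

theory Defs
  imports Complex_Main
begin

text \<open>Vertices v_1..v_n are represented by the indices 0..n-1; a digraph is an edge
relation E on these indices; matrices are functions nat => nat => real that vanish
outside the index range.\<close>

definition strongly_connected :: "nat \<Rightarrow> (nat \<times> nat) set \<Rightarrow> bool" where
  "strongly_connected n E \<longleftrightarrow> (\<forall>i<n. \<forall>j<n. i \<noteq> j \<longrightarrow> (i, j) \<in> E\<^sup>+)"

definition Adj :: "nat \<Rightarrow> (nat \<times> nat) set \<Rightarrow> (nat \<Rightarrow> nat \<Rightarrow> real) set" where
  "Adj n E = {A. (\<forall>i j. ((i, j) \<in> E \<longrightarrow> A i j > 0) \<and> ((i, j) \<notin> E \<longrightarrow> A i j = 0))}"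

definition imbalance :: "nat \<Rightarrow> (nat \<Rightarrow> nat \<Rightarrow> real) \<Rightarrow> nat \<Rightarrow> real" where
  "imbalance n A i = (\<Sum>j<n. A j i) - (\<Sum>j<n. A i j)"

definition weight_balanced :: "nat \<Rightarrow> (nat \<Rightarrow> nat \<Rightarrow> real) \<Rightarrow> bool" where
  "weight_balanced n A \<longleftrightarrow> (\<forall>i<n. imbalance n A i = 0)"

definition astar :: "nat \<Rightarrow> (nat \<Rightarrow> nat \<Rightarrow> real) \<Rightarrow> nat \<Rightarrow> real" where
  "astar n A i = Min {A i k | k. k < n \<and> k \<noteq> i \<and> A i k \<noteq> 0}"

definition Jstar :: "nat \<Rightarrow> (nat \<Rightarrow> nat \<Rightarrow> real) \<Rightarrow> nat \<Rightarrow> nat set" where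
  "Jstar n A i = {j. j < n \<and> j \<noteq> i \<and> A i j \<noteq> 0 \<and> A i j = astar n A i}"

definition f_imcor :: "nat \<Rightarrow> (nat \<times> nat) set \<Rightarrow> (nat \<Rightarrow> nat \<Rightarrow> real)
    \<Rightarrow> (nat \<Rightarrow> nat \<Rightarrow> real) set" where
  "f_imcor n E A = {B \<in> Adj n E. \<forall>i<n. \<exists>j\<in>Jstar n A i. \<forall>l<n.
      B i l = (if imbalance n A i > 0 \<and> l = j then A i l + imbalance n A i else A i l)}"

end

theory Submission
  imports Defs
begin

text \<open>A positive imbalance is never created, only passed along an edge, and a negative
imbalance can only shrink. So the number of unbalanced vertices is non-increasing and
eventually constant; from then on no positive packet ever reaches a negative vertex, packets
never merge, and each packet keeps its mass, which is bounded below by some \<open>\<delta> > 0\<close>.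
A vertex that holds a packet infinitely often must also pass packets infinitely often to each
of its out-neighbours: otherwise the weight \<open>w\<close> of such an edge is eventually frozen, every
transfer goes to an edge of weight at most \<open>w\<close>, and the bounded potential
\<open>\<Sum>l. min (a\<^sub>u\<^sub>l) (w + \<delta>)\<close> would grow by \<open>\<delta>\<close> infinitely often. By strong
connectivity packets would then reach the (fixed) negative vertices, which is impossible, so
eventually there are no packets at all.\<close>

definition inflow :: "nat \<Rightarrow> (nat \<Rightarrow> nat \<Rightarrow> real) \<Rightarrow> (nat \<Rightarrow> nat) \<Rightarrow> nat \<Rightarrow> real" where
  "inflow n A c i = (\<Sum>j<n. if imbalance n A j > 0 \<and> c j = i then imbalance n A j else 0)"

lemma inflow_nonneg: "inflow n A c i \<ge> 0"
  unfolding inflow_def by (rule sum_nonneg) auto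

lemma inflow_eq_0:
  assumes "i \<notin> c ` {j. j < n \<and> imbalance n A j > 0}"
  shows "inflow n A c i = 0"
  unfolding inflow_def by (rule sum.neutral) (use assms in auto)

lemma inflow_inj_on:
  assumes "inj_on c {j. j < n \<and> imbalance n A j > 0}" and "j < n" "imbalance n A j > 0"
  shows "inflow n A c (c j) = imbalance n A j"
proof -
  have "inflow n A c (c j) = (\<Sum>j'<n. if j' = j then imbalance n A j else 0)"
    unfolding inflow_def by (rule sum.cong) (use assms in \<open>auto simp: inj_on_def\<close>)
  then show ?thesis using assms(2) by simp
qed

lemma sum_imbalance_eq_0: "(\<Sum>i<n. imbalance n A i) = 0"
  unfolding imbalance_def by (simp add: sum_subtractf sum.swap[of "\<lambda>i j. A j i"])

lemma exists_negative_imbalance: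
  assumes "i < n" "imbalance n A i > 0"
  obtains j where "j < n" "imbalance n A j < 0"
proof -
  have "\<not> (\<forall>j\<in>{..<n}. imbalance n A j \<ge> 0)"
    using sum_nonneg_eq_0_iff[of "{..<n}" "imbalance n A"] sum_imbalance_eq_0 assms by force
  then show ?thesis using that by force
qed

lemma weight_balanced_if_imbalance_nonpos:
  assumes "\<forall>i<n. imbalance n A i \<le> 0"
  shows "weight_balanced n A"
proof -
  have "(\<Sum>i<n. - imbalance n A i) = 0"
    by (simp add: sum_negf sum_imbalance_eq_0)
  then have "\<forall>i\<in>{..<n}. - imbalance n A i = 0"
    using sum_nonneg_eq_0_iff[of "{..<n}" "\<lambda>i. - imbalance n A i"] assms by simp
  then show ?thesis by (simp add: weight_balanced_def)
qed

lemma imbalance_after_transfer: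
  assumes c: "c i < n"
    and B: "\<forall>j<n. \<forall>l<n. B j l = A j l + (if imbalance n A j > 0 \<and> l = c j then imbalance n A j else 0)"
    and "i < n"
  shows "imbalance n B i = imbalance n A i - max (imbalance n A i) 0 + inflow n A c i"
proof -
  have col: "(\<Sum>j<n. B j i) = (\<Sum>j<n. A j i) + inflow n A c i"
    using B \<open>i < n\<close> by (simp add: inflow_def sum.distrib[symmetric] eq_commute[of i])
  have "(\<Sum>l<n. B i l) = (\<Sum>l<n. A i l + (if l = c i then max (imbalance n A i) 0 else 0))"
    using B \<open>i < n\<close> by (intro sum.cong) auto
  then have row: "(\<Sum>l<n. B i l) = (\<Sum>l<n. A i l) + max (imbalance n A i) 0"
    using c by (simp add: sum.distrib)
  show ?thesis using col row by (simp add: imbalance_def)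
qed

lemma Jstar_le:
  assumes "j \<in> Jstar n A i" "l < n" "l \<noteq> i" "A i l \<noteq> 0"
  shows "A i j \<le> A i l"
proof -
  have "finite {A i k | k. k < n \<and> k \<noteq> i \<and> A i k \<noteq> 0}"
    by (rule finite_subset[of _ "A i ` {..<n}"]) auto
  then have "astar n A i \<le> A i l"
    unfolding astar_def using assms(2-4) by (intro Min_le) auto
  then show ?thesis using assms(1) by (simp add: Jstar_def)
qed

lemma inj_on_and_image_eq_if_card_le:
  assumes "finite P" "Q \<subseteq> f ` P" "card P \<le> card Q"
  shows "inj_on f P \<and> f ` P = Q"
proof -
  have "card (f ` P) = card P" and "card Q = card (f ` P)"
    using assms card_image_le[OF assms(1), of f] card_mono[OF finite_imageI[OF assms(1)] assms(2)]
    by linarith+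
  then show ?thesis
    using eq_card_imp_inj_on[OF assms(1)] card_subset_eq[OF finite_imageI[OF assms(1)] assms(2)]
    by auto
qed

lemma incseq_bounded_eventually_small_steps:
  fixes f :: "nat \<Rightarrow> real"
  assumes "incseq f" "\<forall>k. f k \<le> B" "0 < \<delta>"
  shows "\<forall>\<^sub>F k in sequentially. f (Suc k) < f k + \<delta>"
proof -
  obtain L where "f \<longlonglongrightarrow> L"
    using incseq_convergent[OF assms(1,2)] by blast
  then have "(\<lambda>k. f (Suc k) - f k) \<longlonglongrightarrow> L - L"
    by (intro tendsto_diff LIMSEQ_Suc)
  then have "\<forall>\<^sub>F k in sequentially. f (Suc k) - f k < \<delta>"
    using assms(3) by (intro order_tendstoD(2)) auto
  then show ?thesis by (rule eventually_mono) simp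
qed

locale imcor_evolution =
  fixes n :: nat and E :: "(nat \<times> nat) set" and A :: "nat \<Rightarrow> nat \<Rightarrow> nat \<Rightarrow> real"
    and c :: "nat \<Rightarrow> nat \<Rightarrow> nat"
  assumes edges_in_range: "E \<subseteq> {..<n} \<times> {..<n}"
    and connected: "strongly_connected n E"
    and adjacency: "A k \<in> Adj n E"
    and choice_in_Jstar: "i < n \<Longrightarrow> c k i \<in> Jstar n (A k) i"
    and transfer: "i < n \<Longrightarrow> l < n \<Longrightarrow> A (Suc k) i l =
      A k i l + (if imbalance n (A k) i > 0 \<and> l = c k i then imbalance n (A k) i else 0)"
begin

abbreviation \<omega> :: "nat \<Rightarrow> nat \<Rightarrow> real" where
  "\<omega> k \<equiv> imbalance n (A k)"

definition Pos :: "nat \<Rightarrow> nat set" where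
  "Pos k = {i. i < n \<and> \<omega> k i > 0}"

definition Neg :: "nat \<Rightarrow> nat set" where
  "Neg k = {i. i < n \<and> \<omega> k i < 0}"

lemma finite_Pos: "finite (Pos k)" and finite_Neg: "finite (Neg k)"
  unfolding Pos_def Neg_def by auto

lemma choice_less: "i < n \<Longrightarrow> c k i < n"
  using choice_in_Jstar[of i k] by (auto simp: Jstar_def)

lemma weight_pos: "(i, j) \<in> E \<Longrightarrow> A k i j > 0"
  using adjacency[of k] by (simp add: Adj_def)

lemma weight_mono: "i < n \<Longrightarrow> l < n \<Longrightarrow> A k i l \<le> A (Suc k) i l"
  using transfer[of i l k] by auto

lemma imbalance_Suc:
  "i < n \<Longrightarrow> \<omega> (Suc k) i = \<omega> k i - max (\<omega> k i) 0 + inflow n (A k) (c k) i"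
  using choice_less transfer by (intro imbalance_after_transfer) auto

lemma Neg_Suc_subset: "Neg (Suc k) \<subseteq> Neg k"
proof
  fix i assume "i \<in> Neg (Suc k)"
  then show "i \<in> Neg k"
    using imbalance_Suc[of i k] inflow_nonneg[of n "A k" "c k" i] by (auto simp: Neg_def)
qed

lemma Pos_Suc_subset_image: "Pos (Suc k) \<subseteq> c k ` Pos k"
proof
  fix i assume i: "i \<in> Pos (Suc k)"
  show "i \<in> c k ` Pos k"
  proof (rule ccontr)
    assume "i \<notin> c k ` Pos k"
    then have "inflow n (A k) (c k) i = 0"
      by (intro inflow_eq_0) (simp add: Pos_def)
    then show False using i imbalance_Suc[of i k] by (simp add: Pos_def)
  qed
qed

lemma card_Pos_Suc_le: "card (Pos (Suc k)) \<le> card (Pos k)"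
  using card_mono[OF finite_imageI[OF finite_Pos] Pos_Suc_subset_image] card_image_le[OF finite_Pos]
  by (rule le_trans)

lemma card_Neg_Suc_le: "card (Neg (Suc k)) \<le> card (Neg k)"
  by (rule card_mono[OF finite_Neg Neg_Suc_subset])

lemma card_Pos_Neg_antimono:
  "k \<le> k' \<Longrightarrow> card (Pos k') + card (Neg k') \<le> card (Pos k) + card (Neg k)"
  by (rule lift_Suc_antimono_le[of "\<lambda>k. card (Pos k) + card (Neg k)"])
    (use card_Pos_Suc_le card_Neg_Suc_le in \<open>simp add: add_mono\<close>)

lemma balanced_fixed: "weight_balanced n (A k) \<Longrightarrow> A (Suc k) = A k"
proof (intro ext)
  fix i l assume balanced: "weight_balanced n (A k)"
  show "A (Suc k) i l = A k i l"
  proof (cases "i < n \<and> l < n")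
    case True
    then show ?thesis using transfer[of i l k] balanced by (simp add: weight_balanced_def)
  next
    case False
    then have "(i, l) \<notin> E" using edges_in_range by auto
    then show ?thesis using adjacency[of k] adjacency[of "Suc k"] by (simp add: Adj_def)
  qed
qed

end

locale imcor_stable = imcor_evolution +
  fixes k0 :: nat
  assumes card_Pos_Neg_minimal: "card (Pos k0) + card (Neg k0) \<le> card (Pos k) + card (Neg k)"
begin

lemma stable_step: "k0 \<le> k \<Longrightarrow> card (Pos (Suc k)) = card (Pos k) \<and> Neg (Suc k) = Neg k"
proof -
  assume "k0 \<le> k"
  then have "card (Pos (Suc k)) + card (Neg (Suc k)) = card (Pos k) + card (Neg k)"
    using card_Pos_Neg_antimono[of k0 k] card_Pos_Neg_antimono[of k "Suc k"]
      card_Pos_Neg_minimal[of "Suc k"] by linarith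
  then have "card (Pos (Suc k)) = card (Pos k)" "card (Neg (Suc k)) = card (Neg k)"
    using card_Pos_Suc_le[of k] card_Neg_Suc_le[of k] by linarith+
  then show ?thesis
    using card_subset_eq[OF finite_Neg Neg_Suc_subset[of k]] by simp
qed

lemma Neg_eq: "k0 \<le> k \<Longrightarrow> Neg k = Neg k0"
  by (induction k rule: dec_induct) (use stable_step in simp_all)

lemma card_Pos_eq: "k0 \<le> k \<Longrightarrow> card (Pos k) = card (Pos k0)"
  by (induction k rule: dec_induct) (use stable_step in simp_all)

lemma choice_bij: "k0 \<le> k \<Longrightarrow> inj_on (c k) (Pos k) \<and> c k ` Pos k = Pos (Suc k)"
  using stable_step by (intro inj_on_and_image_eq_if_card_le finite_Pos Pos_Suc_subset_image) auto

text \<open>Packets travel without merging and never land on a negative vertex, so their mass is preserved.\<close>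

lemma imbalance_moves:
  assumes "k0 \<le> k" "j \<in> Pos k"
  shows "\<omega> (Suc k) (c k j) = \<omega> k j"
proof -
  have j: "j < n" "\<omega> k j > 0" using assms(2) by (auto simp: Pos_def)
  have "c k j \<in> Pos (Suc k)" using choice_bij[OF assms(1)] assms(2) by blast
  then have "c k j \<notin> Neg (Suc k)" by (simp add: Pos_def Neg_def)
  then have "c k j \<notin> Neg k" using stable_step[OF assms(1)] by simp
  then have "\<omega> k (c k j) \<ge> 0" using choice_less[OF j(1)] by (simp add: Neg_def not_less)
  moreover have "inflow n (A k) (c k) (c k j) = \<omega> k j"
    using choice_bij[OF assms(1)] j by (intro inflow_inj_on) (simp_all add: Pos_def)
  ultimately show ?thesis using imbalance_Suc[OF choice_less[OF j(1)], of k] by simp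
qed

lemma positive_imbalance_lower_bound:
  obtains \<delta> where "\<delta> > 0" "\<And>k i. k0 \<le> k \<Longrightarrow> i \<in> Pos k \<Longrightarrow> \<delta> \<le> \<omega> k i"
proof
  define \<delta> where "\<delta> = Min (insert 1 (\<omega> k0 ` Pos k0))"
  show "\<delta> > 0"
    unfolding \<delta>_def using finite_Pos by (subst Min_gr_iff) (auto simp: Pos_def)
  show "\<delta> \<le> \<omega> k i" if "k0 \<le> k" "i \<in> Pos k" for k i
    using that
  proof (induction k arbitrary: i rule: dec_induct)
    case base
    then show ?case unfolding \<delta>_def by (intro Min_le) (auto simp: finite_Pos)
  next
    case (step k)
    then obtain j where "j \<in> Pos k" "i = c k j" using choice_bij by blast
    then show ?case using step imbalance_moves by simp
  qed
qed

lemma frequently_Pos_edge: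
  assumes edge: "(u, v) \<in> E" "v \<noteq> u"
    and u_frequent: "\<exists>\<^sub>F k in sequentially. u \<in> Pos k"
  shows "\<exists>\<^sub>F k in sequentially. v \<in> Pos k"
proof (rule ccontr)
  have u: "u < n" and v: "v < n" using edge edges_in_range by auto
  assume "\<not> ?thesis"
  then obtain K where "k0 \<le> K" and v_never: "\<And>k. K \<le> k \<Longrightarrow> v \<notin> Pos k"
    unfolding frequently_sequentially by (metis max.cobounded1 max.cobounded2 order_trans)
  obtain \<delta> where \<delta>: "\<delta> > 0" "\<And>k i. k0 \<le> k \<Longrightarrow> i \<in> Pos k \<Longrightarrow> \<delta> \<le> \<omega> k i"
    using positive_imbalance_lower_bound by blast
  have avoid: "c k u \<noteq> v" if "K \<le> k" "u \<in> Pos k" for k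
    using choice_bij[of k] that \<open>k0 \<le> K\<close> v_never[of "Suc k"] by force
  define w where "w = A K u v"
  have w_frozen: "A k u v = w" if "K \<le> k" for k
    using that
  proof (induction k rule: dec_induct)
    case (step k)
    then show ?case using transfer[OF u v, of k] avoid[of k] by (auto simp: Pos_def u)
  qed (simp add: w_def)
  have chosen_le: "A k u (c k u) \<le> w" if "K \<le> k" for k
    using Jstar_le[OF choice_in_Jstar[OF u, of k] v edge(2)] weight_pos[OF edge(1), of k]
      w_frozen[OF that] by fastforce
  define \<Phi> where "\<Phi> k = (\<Sum>l<n. min (A k u l) (w + \<delta>))" for k
  have "incseq \<Phi>"
    unfolding incseq_Suc_iff \<Phi>_def
    using weight_mono[OF u] by (intro allI sum_mono) (simp add: min.coboundedI1)
  moreover have "\<forall>k. \<Phi> k \<le> real n * (w + \<delta>)"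
    unfolding \<Phi>_def using sum_bounded_above[of "{..<n}" _ "w + \<delta>"] by simp
  ultimately have small_steps: "\<forall>\<^sub>F k in sequentially. \<Phi> (Suc k) < \<Phi> k + \<delta>"
    using \<delta>(1) by (rule incseq_bounded_eventually_small_steps)
  have jump: "\<Phi> k + \<delta> \<le> \<Phi> (Suc k)" if "K \<le> k" "u \<in> Pos k" for k
  proof -
    define d where "d l = min (A (Suc k) u l) (w + \<delta>) - min (A k u l) (w + \<delta>)" for l
    have "\<delta> \<le> d (c k u)"
      using transfer[OF u choice_less[OF u], of k] that chosen_le[OF that(1)] \<delta>(2)[of k u] \<open>k0 \<le> K\<close>
      by (auto simp: d_def Pos_def)
    also have "\<dots> \<le> (\<Sum>l<n. d l)"
      using choice_less[OF u] weight_mono[OF u]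
      by (intro member_le_sum) (auto simp: d_def min.coboundedI1)
    finally show ?thesis by (simp add: \<Phi>_def d_def sum_subtractf)
  qed
  have "\<forall>\<^sub>F k in sequentially. u \<notin> Pos k"
    using small_steps eventually_ge_at_top[of K] by eventually_elim (use jump in force)
  with u_frequent show False by (simp add: frequently_def)
qed

lemma frequently_Pos_everywhere:
  assumes "u < n" "i < n" and u_frequent: "\<exists>\<^sub>F k in sequentially. u \<in> Pos k"
  shows "\<exists>\<^sub>F k in sequentially. i \<in> Pos k"
proof (cases "i = u")
  case False
  then have "(u, i) \<in> E\<^sup>+" using connected assms(1,2) by (simp add: strongly_connected_def)
  then show ?thesis
  proof (induction rule: trancl_induct)
    case (base y)
    show ?case
      using u_frequent frequently_Pos_edge[OF base] by (cases "y = u") simp_all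
  next
    case (step y z)
    show ?case
      using step.IH frequently_Pos_edge[OF step(2)] by (cases "z = y") simp_all
  qed
qed (use u_frequent in simp)

lemma exists_frequently_Pos:
  assumes "Pos k0 \<noteq> {}"
  obtains u where "u < n" "\<exists>\<^sub>F k in sequentially. u \<in> Pos k"
proof (rule ccontr)
  assume "\<not> thesis"
  then have "\<forall>u\<in>{..<n}. \<forall>\<^sub>F k in sequentially. u \<notin> Pos k"
    using that by (auto simp: frequently_def)
  then have "\<forall>\<^sub>F k in sequentially. k0 \<le> k \<and> (\<forall>u\<in>{..<n}. u \<notin> Pos k)"
    by (intro eventually_conj eventually_ge_at_top eventually_ball_finite finite_lessThan)
  then obtain k where k: "k0 \<le> k" "Pos k = {}"
    using eventually_happens'[OF sequentially_bot] by (force simp: Pos_def)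
  then have "card (Pos k0) = 0" using card_Pos_eq[OF k(1)] by simp
  then show False using assms finite_Pos by simp
qed

lemma Pos_k0_empty: "Pos k0 = {}"
proof (rule ccontr)
  assume nonempty: "Pos k0 \<noteq> {}"
  then obtain j where "j < n" "\<omega> k0 j > 0" by (auto simp: Pos_def)
  then obtain i where i: "i < n" "\<omega> k0 i < 0" by (rule exists_negative_imbalance)
  obtain u where "u < n" "\<exists>\<^sub>F k in sequentially. u \<in> Pos k"
    using exists_frequently_Pos[OF nonempty] by blast
  then have "\<exists>\<^sub>F k in sequentially. i \<in> Pos k"
    using frequently_Pos_everywhere i(1) by blast
  moreover have "i \<notin> Pos k" if "k0 \<le> k" for k
  proof -
    have "i \<in> Neg k" using Neg_eq[OF that] i by (simp add: Neg_def)
    then show ?thesis by (simp add: Pos_def Neg_def)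
  qed
  then have "\<forall>\<^sub>F k in sequentially. i \<notin> Pos k"
    by (rule eventually_mono[OF eventually_ge_at_top[of k0]])
  ultimately show False by (simp add: frequently_def)
qed

lemma balanced_from_k0: "k0 \<le> k \<Longrightarrow> weight_balanced n (A k) \<and> A k = A k0"
proof (induction k rule: dec_induct)
  case base
  show ?case
    using Pos_k0_empty by (intro conjI weight_balanced_if_imbalance_nonpos) (auto simp: Pos_def)
next
  case (step k)
  then have "A (Suc k) = A k" using balanced_fixed by blast
  then show ?case using step by auto
qed

end

theorem theorem4p4:
  fixes n :: nat and E :: "(nat \<times> nat) set" and A :: "nat \<Rightarrow> nat \<Rightarrow> nat \<Rightarrow> real"
  assumes "E \<subseteq> {..<n} \<times> {..<n}"
    and "strongly_connected n E"
    and "A 0 \<in> Adj n E"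
    and "\<forall>k. A (Suc k) \<in> f_imcor n E (A k)"
  shows "\<exists>K. weight_balanced n (A K) \<and> (\<forall>k\<ge>K. A k = A K)"
proof -
  have "\<forall>k i. \<exists>j. i < n \<longrightarrow> j \<in> Jstar n (A k) i \<and> (\<forall>l<n. A (Suc k) i l =
      A k i l + (if imbalance n (A k) i > 0 \<and> l = j then imbalance n (A k) i else 0))"
    using assms(4) unfolding f_imcor_def by fastforce
  then obtain c where c: "\<And>k i. i < n \<Longrightarrow> c k i \<in> Jstar n (A k) i \<and> (\<forall>l<n. A (Suc k) i l =
      A k i l + (if imbalance n (A k) i > 0 \<and> l = c k i then imbalance n (A k) i else 0))"
    by metis
  have "A k \<in> Adj n E" for k
    using assms(3,4) by (cases k) (auto simp: f_imcor_def)
  then interpret imcor_evolution n E A c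
    using assms(1,2) c by unfold_locales auto
  obtain k0 where "\<forall>k. card (Pos k0) + card (Neg k0) \<le> card (Pos k) + card (Neg k)"
    using ex_has_least_nat[of "\<lambda>_. True" 0 "\<lambda>k. card (Pos k) + card (Neg k)"] by blast
  then interpret imcor_stable n E A c k0
    by unfold_locales blast
  show ?thesis using balanced_from_k0 by blast
qed

end
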